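(* Let $H_m,H_{el}$ be finite groups with an action $(h,g)\mapsto h\cdot g$ of $H_{el}$ on $H_m$ satisfying $h\cdot(gg')=(h\cdot g)(h\cdot g')$, and let $\mathcal{A}=F(H_m)\times\mathbb{C}H_{el}$ be the modified quantum double, with elements written as functions in $F(H_m\times H_{el})$. Let $A\subset H_m$ be an $H_{el}$-orbit with preferred element $g_A$, $N_A=\{h\in H_{el}:h\cdot g_A=g_A\}$, and $\Pi^A_1$ the magnetic irreducible representation (trivial representation of $N_A$). Let $E\subseteq A$ and consider the condensate $|\phi_r\rangle=\sum_{g_i\in E}|g_i\rangle$, which as a function on $H_{el}$ is $|\phi_r(x)\rangle=1_{V_E}(x)$ with $V_E=\{x\in H_{el}:x\cdot g_A\in E\}$. Let $M_E=\{m\in H_{el}: mV_E=V_E\}=\{m\in H_{el}:\{m\cdot g_i\}_{g_i\in E}=E\}$ and let $K$ be the smallest subgroup of $H_m$ containing $E$. Then $\mathcal{T}_r:=\{a\in\mathcal{A}:(\mathrm{id}\otimes\Pi^A_1)\Delta(a)(1\otimes|\phi_r\rangle)=a\otimes|\phi_r\rangle\}$ equals $F(H_m/K)\otimes\mathbb{C}M_E$; that is, $f\in\mathcal{T}_r$ if and only if $f(x_1,y_1)=0$ whenever $y_1\notin M_E$, and $f(x_1k,y_1)=f(x_1,y_1)$ for all $x_1\in H_m$, $y_1\in H_{el}$, $k\in K$.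
   Context: Modified quantum double: vector space $F(H_m)\otimes\mathbb{C}H_{el}$ with basis $P_gh$, identified with $F(H_m\times H_{el})$ via $P_gh\leftrightarrow\delta_g\otimes\delta_h$; $P_ghP_{g'}h'=\delta_{g,h\cdot g'}P_ghh'$, $\Delta(P_gh)=\sum_{g'\in H_m}P_{g'}h\otimes P_{g'^{-1}g}h$ (in function notation $\Delta(f)(x_1,y_1;x_2,y_2)=f(x_1x_2,y_1)\delta_{y_1}(y_2)$), $\varepsilon(P_gh)=\delta_{g,e}$, $S(P_gh)=P_{h^{-1}\cdot g^{-1}}h^{-1}$. The carrier space of $\Pi^A_1$ is $\{\phi:H_{el}\to\mathbb{C}\mid \phi(xn)=\phi(x)\ \forall n\in N_A\}$, with action $(\Pi^A_1(f)\phi)(x)=\sum_{z\in H_{el}}f(x\cdot g_A,z)\phi(z^{-1}x)$; the basis vector $|g\rangle$ ($g\in A$) is the indicator function of $\{x\in H_{el}:x\cdot g_A=g\}$. $F(H_m/K)$ denotes functions on $H_m$ constant on left cosets $gK$. *)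

theory Defs
  imports Complex_Main "HOL-Algebra.Generated_Groups"
begin

text \<open>Modified quantum double F(H_m) x CH_el, elements written as functions
  f :: H_m x H_el => complex (only values on the carriers matter).
  G plays the role of H_m, H the role of H_el, act h g = h . g.\<close>

definition qd_Delta :: "('g, 'a) monoid_scheme \<Rightarrow> ('g \<times> 'h \<Rightarrow> complex)
    \<Rightarrow> ('g \<times> 'h) \<Rightarrow> ('g \<times> 'h) \<Rightarrow> complex" where
  "qd_Delta G f = (\<lambda>(x1, y1) (x2, y2). f (x1 \<otimes>\<^bsub>G\<^esub> x2, y1) * (if y1 = y2 then 1 else 0))"

definition Pi1 :: "('h, 'b) monoid_scheme \<Rightarrow> ('h \<Rightarrow> 'g \<Rightarrow> 'g) \<Rightarrow> 'g
    \<Rightarrow> ('g \<times> 'h \<Rightarrow> complex) \<Rightarrow> ('h \<Rightarrow> complex) \<Rightarrow> ('h \<Rightarrow> complex)" where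
  "Pi1 H act gA f \<phi> = (\<lambda>x. \<Sum>z\<in>carrier H. f (act x gA, z) * \<phi> (inv\<^bsub>H\<^esub> z \<otimes>\<^bsub>H\<^esub> x))"

text \<open>(id (x) Pi)Delta(a)(1 (x) phi), an element of A (x) V, written as a function
  (x1,y1) |-> vector in V.\<close>
definition id_Pi_Delta_apply :: "('g, 'a) monoid_scheme \<Rightarrow> ('h, 'b) monoid_scheme
    \<Rightarrow> ('h \<Rightarrow> 'g \<Rightarrow> 'g) \<Rightarrow> 'g \<Rightarrow> ('g \<times> 'h \<Rightarrow> complex) \<Rightarrow> ('h \<Rightarrow> complex)
    \<Rightarrow> ('g \<times> 'h) \<Rightarrow> ('h \<Rightarrow> complex)" where
  "id_Pi_Delta_apply G H act gA a \<phi> = (\<lambda>p. Pi1 H act gA (qd_Delta G a p) \<phi>)"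

definition tensor_vec :: "('g \<times> 'h \<Rightarrow> complex) \<Rightarrow> ('h \<Rightarrow> complex) \<Rightarrow> ('g \<times> 'h) \<Rightarrow> ('h \<Rightarrow> complex)" where
  "tensor_vec a \<phi> = (\<lambda>p x. a p * \<phi> x)"

definition V_E :: "('h, 'b) monoid_scheme \<Rightarrow> ('h \<Rightarrow> 'g \<Rightarrow> 'g) \<Rightarrow> 'g \<Rightarrow> 'g set \<Rightarrow> 'h set" where
  "V_E H act gA E = {x \<in> carrier H. act x gA \<in> E}"

definition phi_r :: "('h, 'b) monoid_scheme \<Rightarrow> ('h \<Rightarrow> 'g \<Rightarrow> 'g) \<Rightarrow> 'g \<Rightarrow> 'g set \<Rightarrow> 'h \<Rightarrow> complex" where
  "phi_r H act gA E = (\<lambda>x. if x \<in> V_E H act gA E then 1 else 0)"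

definition M_E :: "('h, 'b) monoid_scheme \<Rightarrow> ('h \<Rightarrow> 'g \<Rightarrow> 'g) \<Rightarrow> 'g \<Rightarrow> 'g set \<Rightarrow> 'h set" where
  "M_E H act gA E = {m \<in> carrier H. (\<lambda>x. m \<otimes>\<^bsub>H\<^esub> x) ` V_E H act gA E = V_E H act gA E}"

definition T_r :: "('g, 'a) monoid_scheme \<Rightarrow> ('h, 'b) monoid_scheme
    \<Rightarrow> ('h \<Rightarrow> 'g \<Rightarrow> 'g) \<Rightarrow> 'g \<Rightarrow> 'g set \<Rightarrow> ('g \<times> 'h \<Rightarrow> complex) set" where
  "T_r G H act gA E = {a. \<forall>x1\<in>carrier G. \<forall>y1\<in>carrier H. \<forall>x\<in>carrier H.
      id_Pi_Delta_apply G H act gA a (phi_r H act gA E) (x1, y1) x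
        = tensor_vec a (phi_r H act gA E) (x1, y1) x}"

end

theory Submission
  imports Defs
begin

text \<open>After evaluating the coproduct, the defining equation of \<open>T_r\<close> at \<open>(x1, y1, x)\<close> reads
  \<open>f (x1 (x . gA), y1) 1_V (y1\<inverse> x) = f (x1, y1) 1_V (x)\<close> with \<open>V = V_E\<close>, so it decouples
  over \<open>y1\<close>. If \<open>y1 V = V\<close>, the two indicators agree and the equation says that \<open>f (-, y1)\<close> is
  invariant under right translation by every \<open>x . gA \<in> E\<close>, hence by the subgroup \<open>K\<close> that \<open>E\<close>
  generates. If \<open>y1 V \<noteq> V\<close>, finiteness yields some \<open>x \<in> V\<close> with \<open>y1\<inverse> x \<notin> V\<close>, and the equation
  at that \<open>x\<close> forces \<open>f (-, y1) = 0\<close>.\<close>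

lemma id_Pi_Delta_apply_eq:
  assumes "finite (carrier H)" "y1 \<in> carrier H"
  shows "id_Pi_Delta_apply G H act gA f \<phi> (x1, y1) x
       = f (x1 \<otimes>\<^bsub>G\<^esub> act x gA, y1) * \<phi> (inv\<^bsub>H\<^esub> y1 \<otimes>\<^bsub>H\<^esub> x)"
proof -
  have "id_Pi_Delta_apply G H act gA f \<phi> (x1, y1) x
     = (\<Sum>z\<in>carrier H. if z = y1
          then f (x1 \<otimes>\<^bsub>G\<^esub> act x gA, y1) * \<phi> (inv\<^bsub>H\<^esub> z \<otimes>\<^bsub>H\<^esub> x) else 0)"
    unfolding id_Pi_Delta_apply_def Pi1_def qd_Delta_def
    by (rule sum.cong) auto
  also have "\<dots> = f (x1 \<otimes>\<^bsub>G\<^esub> act x gA, y1) * \<phi> (inv\<^bsub>H\<^esub> y1 \<otimes>\<^bsub>H\<^esub> x)"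
    using assms by (simp add: sum.delta)
  finally show ?thesis .
qed

definition T_r_fibre_condition :: "('g, 'a) monoid_scheme \<Rightarrow> ('h, 'b) monoid_scheme
    \<Rightarrow> ('h \<Rightarrow> 'g \<Rightarrow> 'g) \<Rightarrow> 'g \<Rightarrow> 'g set \<Rightarrow> ('g \<times> 'h \<Rightarrow> complex) \<Rightarrow> 'h \<Rightarrow> bool" where
  "T_r_fibre_condition G H act gA E f y1 \<longleftrightarrow>
    (\<forall>x1\<in>carrier G. \<forall>x\<in>carrier H.
       f (x1 \<otimes>\<^bsub>G\<^esub> act x gA, y1) * phi_r H act gA E (inv\<^bsub>H\<^esub> y1 \<otimes>\<^bsub>H\<^esub> x)
         = f (x1, y1) * phi_r H act gA E x)"

lemma mem_T_r_iff_fibrewise: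
  assumes "finite (carrier H)"
  shows "f \<in> T_r G H act gA E \<longleftrightarrow> (\<forall>y1\<in>carrier H. T_r_fibre_condition G H act gA E f y1)"
  unfolding T_r_def T_r_fibre_condition_def
  by (auto simp: tensor_vec_def id_Pi_Delta_apply_eq[OF assms])

lemma (in group) translation_stable_inv_mem_iff:
  assumes "(\<lambda>x. y \<otimes> x) ` V = V" "V \<subseteq> carrier G" "y \<in> carrier G" "x \<in> carrier G"
  shows "inv y \<otimes> x \<in> V \<longleftrightarrow> x \<in> V"
proof
  assume "inv y \<otimes> x \<in> V"
  then have "y \<otimes> (inv y \<otimes> x) \<in> V"
    using assms(1) by blast
  then show "x \<in> V"
    using assms(3,4) by (simp add: m_assoc[symmetric])
next
  assume "x \<in> V"
  then obtain v where "v \<in> V" "x = y \<otimes> v"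
    using assms(1) by blast
  moreover have "inv y \<otimes> (y \<otimes> v) = v"
    using \<open>v \<in> V\<close> assms(2,3) by (auto simp: m_assoc[symmetric])
  ultimately show "inv y \<otimes> x \<in> V" by simp
qed

lemma (in group) translation_stable_iff:
  assumes "finite V" "V \<subseteq> carrier G" "y \<in> carrier G"
  shows "(\<lambda>x. y \<otimes> x) ` V = V \<longleftrightarrow> (\<forall>x\<in>V. inv y \<otimes> x \<in> V)"
proof
  assume "(\<lambda>x. y \<otimes> x) ` V = V"
  then show "\<forall>x\<in>V. inv y \<otimes> x \<in> V"
    using assms(2,3) translation_stable_inv_mem_iff by blast
next
  assume "\<forall>x\<in>V. inv y \<otimes> x \<in> V"
  then have "(\<lambda>x. inv y \<otimes> x) ` V = V"
    using assms by (intro endo_inj_surj inj_on_subset[OF inj_on_cmult]) auto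
  then have "(\<lambda>x. y \<otimes> x) ` V = (\<lambda>x. y \<otimes> (inv y \<otimes> x)) ` V"
    by (metis image_image)
  also have "\<dots> = (\<lambda>x. x) ` V"
    using assms(2,3) by (intro image_cong) (auto simp: m_assoc[symmetric])
  also have "\<dots> = V" by simp
  finally show "(\<lambda>x. y \<otimes> x) ` V = V" .
qed

lemma V_E_subset_carrier: "V_E H act gA E \<subseteq> carrier H"
  unfolding V_E_def by blast

lemma mem_M_E_iff:
  assumes "group H" "finite (carrier H)" "y \<in> carrier H"
  shows "y \<in> M_E H act gA E \<longleftrightarrow> (\<forall>x\<in>V_E H act gA E. inv\<^bsub>H\<^esub> y \<otimes>\<^bsub>H\<^esub> x \<in> V_E H act gA E)"
proof -
  have "finite (V_E H act gA E)"
    using finite_subset[OF V_E_subset_carrier assms(2)] .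
  then show ?thesis
    unfolding M_E_def
    using group.translation_stable_iff[OF assms(1) _ V_E_subset_carrier assms(3)] assms(3) by simp
qed

lemma T_r_fibre_condition_if_mem_M_E:
  assumes "group H" "y1 \<in> M_E H act gA E" "E \<subseteq> (\<lambda>h. act h gA) ` carrier H"
  shows "T_r_fibre_condition G H act gA E f y1
    \<longleftrightarrow> (\<forall>x1\<in>carrier G. \<forall>e\<in>E. f (x1 \<otimes>\<^bsub>G\<^esub> e, y1) = f (x1, y1))"
proof -
  have y1: "y1 \<in> carrier H" and stable: "(\<lambda>x. y1 \<otimes>\<^bsub>H\<^esub> x) ` V_E H act gA E = V_E H act gA E"
    using assms(2) unfolding M_E_def by auto
  have "phi_r H act gA E (inv\<^bsub>H\<^esub> y1 \<otimes>\<^bsub>H\<^esub> x) = phi_r H act gA E x" if "x \<in> carrier H" for x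
    using group.translation_stable_inv_mem_iff[OF assms(1) stable V_E_subset_carrier y1 that]
    unfolding phi_r_def by simp
  then have "T_r_fibre_condition G H act gA E f y1 \<longleftrightarrow>
      (\<forall>x1\<in>carrier G. \<forall>x\<in>carrier H. act x gA \<in> E \<longrightarrow> f (x1 \<otimes>\<^bsub>G\<^esub> act x gA, y1) = f (x1, y1))"
    unfolding T_r_fibre_condition_def by (simp add: phi_r_def V_E_def)
  also have "\<dots> \<longleftrightarrow> (\<forall>x1\<in>carrier G. \<forall>e\<in>E. f (x1 \<otimes>\<^bsub>G\<^esub> e, y1) = f (x1, y1))"
    using assms(3) by blast
  finally show ?thesis .
qed

lemma T_r_fibre_condition_if_not_mem_M_E:
  assumes "group G" "group H" "finite (carrier H)"
    and "y1 \<in> carrier H" "y1 \<notin> M_E H act gA E"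
    and act_closed: "\<And>h. h \<in> carrier H \<Longrightarrow> act h gA \<in> carrier G"
  shows "T_r_fibre_condition G H act gA E f y1 \<longleftrightarrow> (\<forall>x1\<in>carrier G. f (x1, y1) = 0)"
proof
  assume fibre: "T_r_fibre_condition G H act gA E f y1"
  have "\<not> (\<forall>x\<in>V_E H act gA E. inv\<^bsub>H\<^esub> y1 \<otimes>\<^bsub>H\<^esub> x \<in> V_E H act gA E)"
    using assms(5) mem_M_E_iff[where act = act and gA = gA and E = E, OF assms(2-4)] by simp
  then obtain x where x: "x \<in> V_E H act gA E" "inv\<^bsub>H\<^esub> y1 \<otimes>\<^bsub>H\<^esub> x \<notin> V_E H act gA E"
    by blast
  then have "x \<in> carrier H"
    unfolding V_E_def by simp
  show "\<forall>x1\<in>carrier G. f (x1, y1) = 0"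
  proof
    fix x1 assume "x1 \<in> carrier G"
    with fibre \<open>x \<in> carrier H\<close>
    have "f (x1 \<otimes>\<^bsub>G\<^esub> act x gA, y1) * phi_r H act gA E (inv\<^bsub>H\<^esub> y1 \<otimes>\<^bsub>H\<^esub> x)
        = f (x1, y1) * phi_r H act gA E x"
      unfolding T_r_fibre_condition_def by blast
    with x show "f (x1, y1) = 0"
      by (simp add: phi_r_def)
  qed
next
  assume "\<forall>x1\<in>carrier G. f (x1, y1) = 0"
  then show "T_r_fibre_condition G H act gA E f y1"
    unfolding T_r_fibre_condition_def
    using act_closed group.is_monoid[OF assms(1)] by (simp add: monoid.m_closed)
qed

lemma mem_T_r_iff:
  assumes "group G" "group H" "finite (carrier H)"
    and act_closed: "\<And>h. h \<in> carrier H \<Longrightarrow> act h gA \<in> carrier G"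
    and orbit: "E \<subseteq> (\<lambda>h. act h gA) ` carrier H"
  shows "f \<in> T_r G H act gA E \<longleftrightarrow>
           (\<forall>x1\<in>carrier G. \<forall>y1\<in>carrier H. y1 \<notin> M_E H act gA E \<longrightarrow> f (x1, y1) = 0) \<and>
           (\<forall>x1\<in>carrier G. \<forall>y1\<in>carrier H. \<forall>e\<in>E. f (x1 \<otimes>\<^bsub>G\<^esub> e, y1) = f (x1, y1))"
proof -
  have "T_r_fibre_condition G H act gA E f y1 \<longleftrightarrow>
      (if y1 \<in> M_E H act gA E
       then \<forall>x1\<in>carrier G. \<forall>e\<in>E. f (x1 \<otimes>\<^bsub>G\<^esub> e, y1) = f (x1, y1)
       else \<forall>x1\<in>carrier G. f (x1, y1) = 0)" if "y1 \<in> carrier H" for y1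
    using T_r_fibre_condition_if_mem_M_E[where G = G and f = f and act = act and gA = gA, OF assms(2) _ orbit]
      T_r_fibre_condition_if_not_mem_M_E[where E = E and f = f and act = act and gA = gA, OF assms(1-3) that _ act_closed]
    by simp
  then have "f \<in> T_r G H act gA E \<longleftrightarrow>
      (\<forall>y1\<in>carrier H. if y1 \<in> M_E H act gA E
       then \<forall>x1\<in>carrier G. \<forall>e\<in>E. f (x1 \<otimes>\<^bsub>G\<^esub> e, y1) = f (x1, y1)
       else \<forall>x1\<in>carrier G. f (x1, y1) = 0)"
    unfolding mem_T_r_iff_fibrewise[OF assms(3)] by (intro ball_cong) simp_all
  moreover have "x1 \<otimes>\<^bsub>G\<^esub> e \<in> carrier G" if "x1 \<in> carrier G" "e \<in> E" for x1 e
    using that orbit act_closed group.is_monoid[OF assms(1)] by (blast intro: monoid.m_closed)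
  ultimately show ?thesis
    by (auto split: if_splits)
qed

lemma (in group) right_invariant_generate_iff:
  assumes "E \<subseteq> carrier G"
  shows "(\<forall>x\<in>carrier G. \<forall>k\<in>generate G E. F (x \<otimes> k) = F x)
     \<longleftrightarrow> (\<forall>x\<in>carrier G. \<forall>e\<in>E. F (x \<otimes> e) = F x)"
proof
  assume "\<forall>x\<in>carrier G. \<forall>k\<in>generate G E. F (x \<otimes> k) = F x"
  then show "\<forall>x\<in>carrier G. \<forall>e\<in>E. F (x \<otimes> e) = F x"
    by (blast intro: generate.incl)
next
  assume gen: "\<forall>x\<in>carrier G. \<forall>e\<in>E. F (x \<otimes> e) = F x"
  have "F (x \<otimes> k) = F x" if "k \<in> generate G E" "x \<in> carrier G" for k x
    using that
  proof (induction k arbitrary: x rule: generate.induct)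
    case one
    then show ?case by simp
  next
    case (incl e)
    then show ?case using gen by blast
  next
    case (inv e)
    have e: "e \<in> carrier G"
      using inv.hyps assms by blast
    have "F x = F ((x \<otimes> inv e) \<otimes> e)"
      using e inv.prems by (simp add: m_assoc)
    also have "\<dots> = F (x \<otimes> inv e)"
      using gen inv.hyps inv.prems e by blast
    finally show ?case by simp
  next
    case (eng k1 k2)
    have "k1 \<in> carrier G" "k2 \<in> carrier G"
      using eng.hyps generate_in_carrier[OF assms] by auto
    then have "F (x \<otimes> (k1 \<otimes> k2)) = F ((x \<otimes> k1) \<otimes> k2)"
      using eng.prems by (simp add: m_assoc)
    also have "\<dots> = F x"
      using eng.IH eng.prems \<open>k1 \<in> carrier G\<close> by simp
    finally show ?case .
  qed
  then show "\<forall>x\<in>carrier G. \<forall>k\<in>generate G E. F (x \<otimes> k) = F x"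
    by blast
qed

theorem mainTheorem7:
  fixes G :: "('g, 'a) monoid_scheme" and H :: "('h, 'b) monoid_scheme"
    and act :: "'h \<Rightarrow> 'g \<Rightarrow> 'g" and gA :: 'g and E :: "'g set"
    and f :: "'g \<times> 'h \<Rightarrow> complex"
  assumes "group G" and "group H"
    and "finite (carrier G)" and "finite (carrier H)"
    and act_closed: "\<And>h g. h \<in> carrier H \<Longrightarrow> g \<in> carrier G \<Longrightarrow> act h g \<in> carrier G"
    and act_one: "\<And>g. g \<in> carrier G \<Longrightarrow> act \<one>\<^bsub>H\<^esub> g = g"
    and act_mult: "\<And>h h' g. h \<in> carrier H \<Longrightarrow> h' \<in> carrier H \<Longrightarrow> g \<in> carrier G \<Longrightarrow>
                   act (h \<otimes>\<^bsub>H\<^esub> h') g = act h (act h' g)"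
    and act_hom: "\<And>h g g'. h \<in> carrier H \<Longrightarrow> g \<in> carrier G \<Longrightarrow> g' \<in> carrier G \<Longrightarrow>
                   act h (g \<otimes>\<^bsub>G\<^esub> g') = act h g \<otimes>\<^bsub>G\<^esub> act h g'"
    and "gA \<in> carrier G"
    and "E \<subseteq> (\<lambda>h. act h gA) ` carrier H"
  shows "f \<in> T_r G H act gA E \<longleftrightarrow>
           ((\<forall>x1\<in>carrier G. \<forall>y1\<in>carrier H. y1 \<notin> M_E H act gA E \<longrightarrow> f (x1, y1) = 0) \<and>
            (\<forall>x1\<in>carrier G. \<forall>y1\<in>carrier H. \<forall>k\<in>generate G E.
                f (x1 \<otimes>\<^bsub>G\<^esub> k, y1) = f (x1, y1)))"
proof -
  have orbit_closed: "\<And>h. h \<in> carrier H \<Longrightarrow> act h gA \<in> carrier G"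
    using act_closed assms(9) by blast
  have "E \<subseteq> carrier G"
    using assms(10) orbit_closed by blast
  then have "(\<forall>x1\<in>carrier G. \<forall>k\<in>generate G E. f (x1 \<otimes>\<^bsub>G\<^esub> k, y1) = f (x1, y1))
      \<longleftrightarrow> (\<forall>x1\<in>carrier G. \<forall>e\<in>E. f (x1 \<otimes>\<^bsub>G\<^esub> e, y1) = f (x1, y1))" for y1
    using group.right_invariant_generate_iff[OF assms(1), of E "\<lambda>x1. f (x1, y1)"] by simp
  then have "(\<forall>x1\<in>carrier G. \<forall>y1\<in>carrier H. \<forall>k\<in>generate G E. f (x1 \<otimes>\<^bsub>G\<^esub> k, y1) = f (x1, y1))
      \<longleftrightarrow> (\<forall>x1\<in>carrier G. \<forall>y1\<in>carrier H. \<forall>e\<in>E. f (x1 \<otimes>\<^bsub>G\<^esub> e, y1) = f (x1, y1))"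
    by blast
  then show ?thesis
    using mem_T_r_iff[where act = act and gA = gA and E = E and f = f,
        OF assms(1,2,4) orbit_closed assms(10)]
    by (simp only:)
qed

end
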